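(* For the push-pull ring with $M\ge 2$ servers in the critical case $\lambda_j=\mu_j$ for all $j$, the action drift matrix $\mathbf{D}$ satisfies $\mathrm{rank}(\mathbf{D})=M$ if $M$ is odd and $\mathrm{rank}(\mathbf{D})=M-1$ if $M$ is even. Moreover, when $M$ is even, the vector $\boldsymbol{\alpha}=(+\lambda_1^{-1},-\lambda_2^{-1},+\lambda_3^{-1},-\lambda_4^{-1},\dots,+\lambda_{M-1}^{-1},-\lambda_M^{-1})'$ satisfies $\mathbf{D}\boldsymbol{\alpha}=\mathbf{0}$.
   Context: A push-pull ring has $M\ge2$ servers and $M$ job streams, with strictly positive rates $\lambda_j,\mu_j$; indices are modulo $M$ on $\{1,\dots,M\}$. Server $j$ can either push on stream $j$ (exponential rate $\lambda_j$, adding a job to queue $j$) or pull from queue $j-1$ (exponential rate $\mu_{j-1}$, removing a job from queue $j-1$). An action is an element $a\in\{\text{push},\text{pull}\}^M$ specifying the operation of each server; there are $2^M$ actions. For an action $a$, let $r_a$ be the sum of the rates of the $M$ chosen operations, and let the drift vector $\boldsymbol{\Delta}_a\in\mathbb{R}^M$ be the expected one-step increment of the embedded jump chain under $a$ (each chosen operation completes first with probability its rate divided by $r_a$): its $j$-th entry is $\big(\lambda_j\mathbf{1}\{\text{server } j \text{ pushes}\}-\mu_j\mathbf{1}\{\text{server } j+1 \text{ pulls}\}\big)/r_a$. The action drift matrix $\mathbf{D}$ is the $2^M\times M$ matrix whose rows are $\boldsymbol{\Delta}_a'$ over all $2^M$ actions $a$. *)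

theory Defs
  imports "Jordan_Normal_Form.DL_Rank"
begin

(* Servers / streams are indexed by 1..M; indices are taken modulo M on {1..M}. *)
definition ring_succ :: "nat \<Rightarrow> nat \<Rightarrow> nat" where
  "ring_succ M j = (if j = M then 1 else j + 1)"

definition ring_pred :: "nat \<Rightarrow> nat \<Rightarrow> nat" where
  "ring_pred M j = (if j = 1 then M else j - 1)"

(* An action is a bool list a of length M; a ! (j-1) = True means server j pushes,
   False means server j pulls (from queue j-1). *)
definition pushes :: "bool list \<Rightarrow> nat \<Rightarrow> bool" where
  "pushes a j = a ! (j - 1)"

definition all_actions :: "nat \<Rightarrow> bool list list" where
  "all_actions M = product_lists (replicate M [True, False])"

definition total_rate :: "(nat \<Rightarrow> real) \<Rightarrow> (nat \<Rightarrow> real) \<Rightarrow> nat \<Rightarrow> bool list \<Rightarrow> real" where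
  "total_rate lam mu M a =
     (\<Sum>j=1..M. if pushes a j then lam j else mu (ring_pred M j))"

definition drift :: "(nat \<Rightarrow> real) \<Rightarrow> (nat \<Rightarrow> real) \<Rightarrow> nat \<Rightarrow> bool list \<Rightarrow> nat \<Rightarrow> real" where
  "drift lam mu M a j =
     ((if pushes a j then lam j else 0)
      - (if \<not> pushes a (ring_succ M j) then mu j else 0)) / total_rate lam mu M a"

(* The action drift matrix: 2^M x M, rows Delta_a' over all actions a;
   column c (0-based) corresponds to stream c+1. *)
definition drift_matrix :: "(nat \<Rightarrow> real) \<Rightarrow> (nat \<Rightarrow> real) \<Rightarrow> nat \<Rightarrow> real mat" where
  "drift_matrix lam mu M =
     mat_of_rows M (map (\<lambda>a. vec M (\<lambda>c. drift lam mu M a (c + 1))) (all_actions M))"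

end

theory Submission
  imports Defs
begin

text \<open>In the critical case the row of an action a is, up to the positive factor 1/r_a, the vector
  with entries lam_c (1[c pushes] + 1[c+1 pushes] - 1). In the variables z_c = lam_c x_c, the
  all-pull action forces the sum of the z_c to vanish, and then the action in which only server
  c+1 pushes forces z_c + z_(c+1) = 0, cyclically; conversely such alternating z are annihilated
  by every row. Hence the kernel of D is trivial for odd M and the line through alpha for even M;
  in the even case the first M-1 columns are still independent, since the only alternating
  vector vanishing at one index is 0.\<close>

lemma mult_mat_vec_unit_vec:
  fixes A :: "'a::semiring_1 mat"
  assumes "A \<in> carrier_mat n m" "i < m"
  shows "A *\<^sub>v unit_vec m i = col A i"
  using assms by (intro eq_vecI) (auto simp: row_def col_def)

lemma distinct_cols_if_trivial_kernel:
  fixes A :: "'a::field mat"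
  assumes A: "A \<in> carrier_mat n m"
    and ker: "\<And>v. v \<in> carrier_vec m \<Longrightarrow> A *\<^sub>v v = 0\<^sub>v n \<Longrightarrow> v = 0\<^sub>v m"
  shows "distinct (cols A)"
proof (rule ccontr)
  assume "\<not> distinct (cols A)"
  then obtain i j where ij: "i < m" "j < m" "i \<noteq> j" "col A i = col A j"
    using A by (auto simp: distinct_conv_nth)
  define v :: "'a vec" where "v = unit_vec m i - unit_vec m j"
  have v: "v \<in> carrier_vec m" by (simp add: v_def)
  have "A *\<^sub>v v = 0\<^sub>v n"
    using A ij by (simp add: v_def mult_minus_distrib_mat_vec mult_mat_vec_unit_vec)
  then have "v $ i = 0" using ker[OF v] ij by simp
  then show False using ij by (simp add: v_def)
qed

context vec_space
begin

lemma rank_eq_if_trivial_kernel: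
  assumes A: "A \<in> carrier_mat n nc"
    and ker: "\<And>v. v \<in> carrier_vec nc \<Longrightarrow> A *\<^sub>v v = 0\<^sub>v n \<Longrightarrow> v = 0\<^sub>v nc"
  shows "rank A = nc"
proof -
  have distinct: "distinct (cols A)" by (rule distinct_cols_if_trivial_kernel[OF A ker])
  have "lin_indpt (set (cols A))"
  proof
    assume "lin_dep (set (cols A))"
    then obtain v where "v \<in> carrier_vec nc" "v \<noteq> 0\<^sub>v nc" "A *\<^sub>v v = 0\<^sub>v n"
      using lin_depE[OF A _ distinct] by blast
    then show False using ker by blast
  qed
  then show ?thesis by (rule lin_indpt_full_rank[OF A distinct])
qed

lemma rank_less_if_non_distinct_cols:
  assumes A: "A \<in> carrier_mat n nc" and "\<not> distinct (cols A)"
  shows "rank A < nc"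
proof -
  obtain S where S: "maximal S (\<lambda>T. T \<subseteq> set (cols A) \<and> lin_indpt T)"
    using maximal_exists[of "\<lambda>T. T \<subseteq> set (cols A) \<and> lin_indpt T" "card (set (cols A))" "{}"]
    by (meson List.finite_set card_mono empty_iff empty_subsetI finite_lin_indpt2 rev_finite_subset)
  have "card S \<le> card (set (cols A))" using S by (simp add: card_mono maximal_def)
  also have "\<dots> < length (cols A)"
    using \<open>\<not> distinct (cols A)\<close> card_length card_distinct by (metis nat_less_le)
  finally show ?thesis using A rank_card_indpt[OF A S] by simp
qed

lemma rank_less_if_nontrivial_kernel:
  assumes A: "A \<in> carrier_mat n nc"
    and v: "v \<in> carrier_vec nc" "v \<noteq> 0\<^sub>v nc" "A *\<^sub>v v = 0\<^sub>v n"
  shows "rank A < nc"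
proof (cases "distinct (cols A)")
  case True
  then have "\<not> lin_indpt (set (cols A))" using lin_depI[OF A v] by blast
  then have "rank A \<noteq> nc" using full_rank_lin_indpt[OF A _ True] by blast
  then show ?thesis using rank_le_nc[OF A] by simp
next
  case False
  then show ?thesis by (rule rank_less_if_non_distinct_cols[OF A])
qed

lemma rank_ge_if_kernel_meets_last_coord_trivially:
  assumes A: "A \<in> carrier_mat n (Suc k)"
    and ker: "\<And>v. v \<in> carrier_vec (Suc k) \<Longrightarrow> A *\<^sub>v v = 0\<^sub>v n \<Longrightarrow> v $ k = 0 \<Longrightarrow> v = 0\<^sub>v (Suc k)"
  shows "k \<le> rank A"
proof -
  define B where "B = mat_of_cols n (take k (cols A))"
  have cols_A: "set (cols A) \<subseteq> carrier_vec n" using A by (auto simp: cols_def)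
  then have cols_B: "cols B = take k (cols A)"
    unfolding B_def by (meson cols_mat_of_cols in_set_takeD subset_code(1))
  have B: "B \<in> carrier_mat n k"
    using A mat_of_cols_carrier(1)[of n "take k (cols A)"] by (simp add: B_def)
  have "v = 0\<^sub>v k" if v: "v \<in> carrier_vec k" and Bv: "B *\<^sub>v v = 0\<^sub>v n" for v
  proof -
    define w where "w = vec (Suc k) (\<lambda>c. if c < k then v $ c else 0)"
    have "A *\<^sub>v w = B *\<^sub>v v"
    proof (rule eq_vecI)
      fix i assume "i < dim_vec (B *\<^sub>v v)"
      then have i: "i < n" using B by simp
      have "(A *\<^sub>v w) $ i = (\<Sum>c<Suc k. A $$ (i, c) * w $ c)"
        using A i by (simp add: scalar_prod_def w_def atLeast0LessThan)
      also have "\<dots> = (\<Sum>c<k. A $$ (i, c) * v $ c)" by (simp add: w_def)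
      also have "\<dots> = (B *\<^sub>v v) $ i"
        using A B v i by (auto simp: scalar_prod_def B_def mat_of_cols_index atLeast0LessThan cols_def intro!: sum.cong)
      finally show "(A *\<^sub>v w) $ i = (B *\<^sub>v v) $ i" .
    qed (use A B in simp)
    then have "w = 0\<^sub>v (Suc k)" using ker[of w] Bv by (simp add: w_def)
    show ?thesis
    proof (rule eq_vecI)
      fix c assume "c < dim_vec (0\<^sub>v k :: 'a vec)"
      then have "c < k" by simp
      then show "v $ c = 0\<^sub>v k $ c"
        using arg_cong[OF \<open>w = 0\<^sub>v (Suc k)\<close>, of "\<lambda>u. u $ c"] by (simp add: w_def)
    qed (use v in simp)
  qed
  then have "distinct (cols B)" "rank B = k"
    using distinct_cols_if_trivial_kernel[OF B] rank_eq_if_trivial_kernel[OF B] by blast+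
  then have indpt: "lin_indpt (set (cols B))" using full_rank_lin_indpt[OF B] by blast
  have "card (set (cols B)) = k" using B \<open>distinct (cols B)\<close> by (simp add: distinct_card)
  moreover have "set (cols B) \<subseteq> set (cols A)" by (simp add: cols_B set_take_subset)
  ultimately show ?thesis using rank_ge_card_indpt[OF A _ indpt] by simp
qed

end

definition ring_alternating :: "nat \<Rightarrow> (nat \<Rightarrow> 'a::ring_1) \<Rightarrow> bool" where
  "ring_alternating M z \<longleftrightarrow> (\<forall>k<M. z k + z (Suc k mod M) = 0)"

lemma sum_lessThan_rotate: "(\<Sum>c<M. g (Suc c mod M)) = (\<Sum>c<M. g c)"
proof (cases M)
  case (Suc m)
  have "(\<Sum>c<m. g (Suc c mod M)) = (\<Sum>c<m. g (Suc c))"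
    using Suc by (intro sum.cong) auto
  moreover have "(\<Sum>c<M. g c) = g 0 + (\<Sum>c<m. g (Suc c))"
    unfolding Suc by (rule sum.lessThan_Suc_shift)
  ultimately show ?thesis using Suc by (simp add: add.commute)
qed simp

lemma Suc_mod_eq_Suc_mod_iff:
  assumes "c < M" "k < M"
  shows "Suc c mod M = Suc k mod M \<longleftrightarrow> c = k"
  using assms by (auto simp: mod_Suc split: if_splits)

text \<open>r_a times the drift of action a paired with x, in the critical case and in the
  variables z c = lam (c + 1) * x c (columns are 0-based, servers 1-based).\<close>
definition weighted_drift :: "nat \<Rightarrow> (nat \<Rightarrow> 'a::ring_1) \<Rightarrow> bool list \<Rightarrow> 'a" where
  "weighted_drift M z a = (\<Sum>c<M. z c * (of_bool (a ! c) + of_bool (a ! (Suc c mod M)) - 1))"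

lemma weighted_drift_eq_0_if_ring_alternating:
  fixes z :: "nat \<Rightarrow> 'a::{ring_char_0, ring_no_zero_divisors}"
  assumes "ring_alternating M z"
  shows "weighted_drift M z a = 0"
proof -
  have z_Suc: "z (Suc c mod M) = - z c" if "c < M" for c
    using assms that unfolding ring_alternating_def by (simp add: add_eq_0_iff)
  have "(\<Sum>c<M. z c) = (\<Sum>c<M. z (Suc c mod M))"
    by (rule sum_lessThan_rotate[symmetric])
  also have "\<dots> = - (\<Sum>c<M. z c)"
    by (simp add: z_Suc sum_negf)
  finally have sum_z: "(\<Sum>c<M. z c) = 0" by (simp add: eq_neg_iff_add_eq_0 flip: mult_2)
  have "(\<Sum>c<M. z c * of_bool (a ! c)) = (\<Sum>c<M. z (Suc c mod M) * of_bool (a ! (Suc c mod M)))"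
    by (rule sum_lessThan_rotate[symmetric])
  also have "\<dots> = - (\<Sum>c<M. z c * of_bool (a ! (Suc c mod M)))"
    by (simp add: z_Suc sum_negf)
  finally show ?thesis
    using sum_z by (simp add: weighted_drift_def algebra_simps sum.distrib sum_subtractf)
qed

lemma ring_alternating_if_weighted_drift_eq_0:
  assumes "0 < M" and drift_0: "\<And>a. length a = M \<Longrightarrow> weighted_drift M z a = 0"
  shows "ring_alternating M z"
  unfolding ring_alternating_def
proof (intro allI impI)
  fix k assume k: "k < M"
  have "weighted_drift M z (replicate M False) = (\<Sum>c<M. - z c)"
    unfolding weighted_drift_def by (rule sum.cong) simp_all
  then have sum_z: "(\<Sum>c<M. z c) = 0"
    using drift_0[of "replicate M False"] by (simp add: sum_negf)
  define a where "a = (replicate M False)[Suc k mod M := True]"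
  have a_nth: "a ! c \<longleftrightarrow> c = Suc k mod M" if "c < M" for c
    using that by (auto simp: a_def nth_list_update)
  have a_nth_Suc: "a ! (Suc c mod M) \<longleftrightarrow> c = k" if "c < M" for c
  proof -
    have "a ! (Suc c mod M) \<longleftrightarrow> Suc c mod M = Suc k mod M"
      by (rule a_nth) (simp add: assms)
    also have "\<dots> \<longleftrightarrow> c = k" by (rule Suc_mod_eq_Suc_mod_iff[OF that k])
    finally show ?thesis .
  qed
  have "z c * (of_bool (a ! c) + of_bool (a ! (Suc c mod M)) - 1)
      = (if c = Suc k mod M then z c else 0) + (if c = k then z c else 0) - z c" if "c < M" for c
    unfolding a_nth_Suc[OF that] a_nth[OF that] by simp
  then have "weighted_drift M z a
      = (\<Sum>c<M. (if c = Suc k mod M then z c else 0) + (if c = k then z c else 0) - z c)"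
    unfolding weighted_drift_def by (intro sum.cong) simp_all
  also have "\<dots> = z (Suc k mod M) + z k"
    using k assms sum_z by (simp add: sum.distrib sum_subtractf)
  finally show "z k + z (Suc k mod M) = 0"
    using drift_0[of a] by (simp add: a_def add.commute)
qed

lemma ring_alternating_nth:
  assumes "ring_alternating M z" "k < M"
  shows "z k = (-1) ^ k * z 0"
  using assms(2)
proof (induction k)
  case (Suc k)
  have "z k + z (Suc k) = 0"
    using assms(1) Suc.prems unfolding ring_alternating_def by (metis Suc_lessD mod_less)
  then show ?case using Suc by (simp add: eq_neg_iff_add_eq_0[symmetric])
qed simp

lemma ring_alternating_odd_eq_0:
  fixes z :: "nat \<Rightarrow> 'a::{ring_char_0, ring_no_zero_divisors}"
  assumes alt: "ring_alternating M z" and "odd M" "k < M"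
  shows "z k = 0"
proof -
  obtain m where M: "M = Suc m" using \<open>odd M\<close> by (cases M) auto
  then have "even m" using \<open>odd M\<close> by simp
  then have "z m = z 0" using ring_alternating_nth[OF alt, of m] M by simp
  moreover have "z m + z 0 = 0" using alt M unfolding ring_alternating_def by (metis lessI mod_self)
  ultimately have "2 * z 0 = 0" by (simp add: mult_2)
  then have "z 0 = 0" by simp
  then show ?thesis using ring_alternating_nth[OF alt \<open>k < M\<close>] by simp
qed

lemma ring_alternating_sign:
  assumes "even M"
  shows "ring_alternating M (\<lambda>k. (-1::'a::ring_1) ^ k)"
  unfolding ring_alternating_def
proof (intro allI impI)
  fix k assume "k < M"
  then show "(-1::'a) ^ k + (-1) ^ (Suc k mod M) = 0"
    using \<open>even M\<close> by (cases "Suc k = M") auto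
qed

lemma length_all_actions: "length (all_actions M) = 2 ^ M"
  unfolding all_actions_def by (induction M) (auto simp: length_product_lists)

lemma set_all_actions: "set (all_actions M) = {a. length a = M}"
  unfolding all_actions_def product_lists_set by (auto simp: list_all2_conv_all_nth)

lemma drift_matrix_carrier: "drift_matrix lam mu M \<in> carrier_mat (2 ^ M) M"
  unfolding drift_matrix_def by (simp add: mat_of_rows_def length_all_actions)

lemma drift_matrix_mult_vec_eq_0_iff:
  assumes "v \<in> carrier_vec M"
  shows "drift_matrix lam mu M *\<^sub>v v = 0\<^sub>v (2 ^ M) \<longleftrightarrow>
    (\<forall>a. length a = M \<longrightarrow> (\<Sum>c<M. drift lam mu M a (Suc c) * v $ c) = 0)"
proof -
  let ?D = "drift_matrix lam mu M"
  have row: "(?D *\<^sub>v v) $ i = (\<Sum>c<M. drift lam mu M (all_actions M ! i) (Suc c) * v $ c)"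
    if "i < 2 ^ M" for i
    using that assms
    by (simp add: drift_matrix_def length_all_actions scalar_prod_def atLeast0LessThan)
  have "?D *\<^sub>v v = 0\<^sub>v (2 ^ M) \<longleftrightarrow> (\<forall>i<2 ^ M. (?D *\<^sub>v v) $ i = 0)"
    using drift_matrix_carrier[of lam mu M] by (auto simp: vec_eq_iff)
  also have "\<dots> \<longleftrightarrow> (\<forall>a\<in>set (all_actions M). (\<Sum>c<M. drift lam mu M a (Suc c) * v $ c) = 0)"
    by (simp add: row all_set_conv_all_nth length_all_actions)
  finally show ?thesis by (simp add: set_all_actions)
qed


lemma total_rate_pos:
  assumes "0 < M" "\<And>j. j \<in> {1..M} \<Longrightarrow> lam j > 0" "\<And>j. j \<in> {1..M} \<Longrightarrow> mu j > 0"
  shows "total_rate lam mu M a > 0"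
  unfolding total_rate_def
proof (rule sum_pos)
  fix j assume j: "j \<in> {1..M}"
  then have "ring_pred M j \<in> {1..M}" by (auto simp: ring_pred_def)
  then show "0 < (if pushes a j then lam j else mu (ring_pred M j))" using j assms by auto
qed (use assms in auto)

locale critical_ring =
  fixes M :: nat and lam mu :: "nat \<Rightarrow> real"
  assumes M_pos: "0 < M"
    and lam_pos: "\<And>j. j \<in> {1..M} \<Longrightarrow> lam j > 0"
    and mu_eq_lam: "\<And>j. j \<in> {1..M} \<Longrightarrow> mu j = lam j"
begin

lemma total_rate_neq_0: "total_rate lam mu M a \<noteq> 0"
  using total_rate_pos[where lam = lam and mu = mu and a = a, OF M_pos lam_pos] lam_pos mu_eq_lam
  by fastforce

lemma drift_Suc:
  assumes "c < M"
  shows "drift lam mu M a (Suc c) =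
    lam (Suc c) * (of_bool (a ! c) + of_bool (a ! (Suc c mod M)) - 1) / total_rate lam mu M a"
proof -
  have "ring_succ M (Suc c) - 1 = Suc c mod M" using assms by (auto simp: ring_succ_def)
  then have "pushes a (ring_succ M (Suc c)) = a ! (Suc c mod M)" by (simp add: pushes_def)
  moreover have "mu (Suc c) = lam (Suc c)" using assms mu_eq_lam by simp
  ultimately show ?thesis by (simp add: drift_def pushes_def)
qed

lemma drift_sum_eq_weighted_drift:
  "(\<Sum>c<M. drift lam mu M a (Suc c) * v $ c)
    = weighted_drift M (\<lambda>k. lam (Suc k) * v $ k) a / total_rate lam mu M a"
  unfolding weighted_drift_def sum_divide_distrib
proof (rule sum.cong)
  fix c assume "c \<in> {..<M}"
  then show "drift lam mu M a (Suc c) * v $ c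
    = lam (Suc c) * v $ c * (of_bool (a ! c) + of_bool (a ! (Suc c mod M)) - 1) / total_rate lam mu M a"
    using drift_Suc[of c a] by simp
qed simp

lemma drift_matrix_mult_vec_eq_0_iff_ring_alternating:
  assumes "v \<in> carrier_vec M"
  shows "drift_matrix lam mu M *\<^sub>v v = 0\<^sub>v (2 ^ M) \<longleftrightarrow> ring_alternating M (\<lambda>k. lam (Suc k) * v $ k)"
proof -
  have "drift_matrix lam mu M *\<^sub>v v = 0\<^sub>v (2 ^ M) \<longleftrightarrow>
      (\<forall>a. length a = M \<longrightarrow> weighted_drift M (\<lambda>k. lam (Suc k) * v $ k) a = 0)"
    using drift_matrix_mult_vec_eq_0_iff[OF assms]
    by (simp add: drift_sum_eq_weighted_drift total_rate_neq_0)
  also have "\<dots> \<longleftrightarrow> ring_alternating M (\<lambda>k. lam (Suc k) * v $ k)"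
    using weighted_drift_eq_0_if_ring_alternating ring_alternating_if_weighted_drift_eq_0[OF M_pos]
    by blast
  finally show ?thesis .
qed

lemma vec_eq_0_if_weighted_eq_0:
  assumes v: "v \<in> carrier_vec M" and w: "\<And>k. k < M \<Longrightarrow> lam (Suc k) * v $ k = 0"
  shows "v = 0\<^sub>v M"
proof (rule eq_vecI)
  fix k assume "k < dim_vec (0\<^sub>v M :: real vec)"
  then have k: "k < M" by simp
  show "v $ k = 0\<^sub>v M $ k" using w[OF k] lam_pos[of "Suc k"] k by simp
qed (use v in simp)

lemma drift_matrix_mult_alternating_vec:
  assumes "even M"
  shows "drift_matrix lam mu M *\<^sub>v vec M (\<lambda>c. (-1) ^ c / lam (c + 1)) = 0\<^sub>v (2 ^ M)"
proof -
  have "lam (Suc k) * vec M (\<lambda>c. (-1) ^ c / lam (c + 1)) $ k = (-1) ^ k" if "k < M" for k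
    using lam_pos[of "Suc k"] that by simp
  then have "ring_alternating M (\<lambda>k. lam (Suc k) * vec M (\<lambda>c. (-1) ^ c / lam (c + 1)) $ k)"
    using ring_alternating_sign[OF assms, where 'a = real] M_pos unfolding ring_alternating_def by simp
  then show ?thesis by (simp add: drift_matrix_mult_vec_eq_0_iff_ring_alternating)
qed

lemma rank_drift_matrix_odd:
  assumes "odd M"
  shows "vec_space.rank (2 ^ M) (drift_matrix lam mu M) = M"
  using drift_matrix_carrier drift_matrix_mult_vec_eq_0_iff_ring_alternating
    vec_eq_0_if_weighted_eq_0 ring_alternating_odd_eq_0[OF _ assms]
  by (intro vec_space.rank_eq_if_trivial_kernel) blast+

lemma rank_drift_matrix_even:
  assumes "even M"
  shows "vec_space.rank (2 ^ M) (drift_matrix lam mu M) = M - 1"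
proof -
  obtain m where M: "M = Suc m" using M_pos by (cases M) auto
  let ?\<alpha> = "vec M (\<lambda>c. (-1) ^ c / lam (c + 1)) :: real vec"
  have "?\<alpha> \<noteq> 0\<^sub>v M"
    using lam_pos[of 1] M by (auto dest: arg_cong[where f = "\<lambda>v. v $ 0"])
  then have "vec_space.rank (2 ^ M) (drift_matrix lam mu M) < M"
    using drift_matrix_mult_alternating_vec[OF assms]
    by (intro vec_space.rank_less_if_nontrivial_kernel[OF drift_matrix_carrier]) auto
  moreover have "m \<le> vec_space.rank (2 ^ M) (drift_matrix lam mu M)"
  proof (rule vec_space.rank_ge_if_kernel_meets_last_coord_trivially)
    show "drift_matrix lam mu M \<in> carrier_mat (2 ^ M) (Suc m)" using drift_matrix_carrier[of lam mu M] M by simp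
    fix v assume v: "v \<in> carrier_vec (Suc m)" "drift_matrix lam mu M *\<^sub>v v = 0\<^sub>v (2 ^ M)" "v $ m = 0"
    then have alt: "ring_alternating M (\<lambda>k. lam (Suc k) * v $ k)"
      using drift_matrix_mult_vec_eq_0_iff_ring_alternating M by simp
    have "v $ 0 = 0" using ring_alternating_nth[OF alt, of m] v(3) M lam_pos[of 1] by simp
    then show "v = 0\<^sub>v (Suc m)"
      using vec_eq_0_if_weighted_eq_0[of v] ring_alternating_nth[OF alt] v(1) M by simp
  qed
  ultimately show ?thesis using M by simp
qed

end

theorem lemma2:
  fixes M :: nat and lam mu :: "nat \<Rightarrow> real"
  assumes "M \<ge> 2"
    and "\<And>j. j \<in> {1..M} \<Longrightarrow> lam j > 0"
    and "\<And>j. j \<in> {1..M} \<Longrightarrow> mu j > 0"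
    and "\<And>j. j \<in> {1..M} \<Longrightarrow> mu j = lam j"
  shows "vec_space.rank (2 ^ M) (drift_matrix lam mu M) = (if odd M then M else M - 1)
       \<and> (even M \<longrightarrow>
            drift_matrix lam mu M *\<^sub>v vec M (\<lambda>c. (-1) ^ c / lam (c + 1)) = 0\<^sub>v (2 ^ M))"
proof -
  interpret critical_ring M lam mu
    using assms by unfold_locales auto
  show ?thesis
    using rank_drift_matrix_odd rank_drift_matrix_even drift_matrix_mult_alternating_vec by simp
qed

end
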